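(* For $v\in(0,1)$ and $x\in[\phi(v),\phi(v+)]$, the function $\psi_{v,x}$ is non-increasing and absolutely continuous on $[v,1]$.
   Context: Let $\mu,\nu$ be probability measures on $\mathbb R$ with finite first moments and $\mu\le_{cx}\nu$. Put $P_\eta(k)=\int(k-x)^+\eta(dx)$, $D=P_\nu-P_\mu$, and assume $\{k:D(k)>0\}$ is an interval. Let $G$ be the left-continuous quantile function of $\mu$. For $u\in(0,1)$ let $\mu_u(A)=\mu(A\cap(-\infty,G(u)))+\big(u-\mu((-\infty,G(u)))\big)\delta_{G(u)}(A)$ and $\mathcal E_u=P_\nu-P_{\mu_u}$. $f^c$ is the largest convex minorant of $f$. Define $\phi(u)=\inf\partial\mathcal E_u^c(G(u))$ for $u\in(0,1)$, $\phi(1)=0$, and $\phi(v+)=\lim_{w\downarrow v}\phi(w)$ (this limit exists). For $v\in(0,1)$, $x\in[0,1)$ define $\psi_{v,x}:[v,1]\to[0,1]$ by $\psi_{v,x}(w)=x\wedge\inf_{v<u\le w}\phi(u)$. *)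

theory Defs
  imports "HOL-Probability.Probability"
begin

definition real_prob_fm :: "real measure \<Rightarrow> bool" where
  "real_prob_fm \<eta> \<longleftrightarrow> prob_space \<eta> \<and> sets \<eta> = sets borel \<and> integrable \<eta> (\<lambda>x. x)"

definition convex_order :: "real measure \<Rightarrow> real measure \<Rightarrow> bool" where
  "convex_order \<mu> \<nu> \<longleftrightarrow>
     (\<forall>f::real \<Rightarrow> real. convex_on UNIV f \<longrightarrow> integrable \<mu> f \<longrightarrow> integrable \<nu> f \<longrightarrow>
        integral\<^sup>L \<mu> f \<le> integral\<^sup>L \<nu> f)"

definition put_price :: "real measure \<Rightarrow> real \<Rightarrow> real" where
  "put_price \<eta> k = integral\<^sup>L \<eta> (\<lambda>x. max (k - x) 0)"

definition quantile :: "real measure \<Rightarrow> real \<Rightarrow> real" where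
  "quantile \<mu> u = Inf {x. measure \<mu> {..x} \<ge> u}"

definition mu_u :: "real measure \<Rightarrow> real \<Rightarrow> real measure" where
  "mu_u \<mu> u = measure_of UNIV (sets borel)
     (\<lambda>A. emeasure \<mu> (A \<inter> {..<quantile \<mu> u})
          + ennreal ((u - measure \<mu> {..<quantile \<mu> u}) * indicator A (quantile \<mu> u)))"

definition E_u :: "real measure \<Rightarrow> real measure \<Rightarrow> real \<Rightarrow> real \<Rightarrow> real" where
  "E_u \<mu> \<nu> u k = put_price \<nu> k - put_price (mu_u \<mu> u) k"

definition convex_minorant :: "(real \<Rightarrow> real) \<Rightarrow> real \<Rightarrow> real" where
  "convex_minorant f x = Sup {g x | g. convex_on UNIV g \<and> (\<forall>y. g y \<le> f y)}"

definition subdiff :: "(real \<Rightarrow> real) \<Rightarrow> real \<Rightarrow> real set" where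
  "subdiff f x = {s. \<forall>y. f x + s * (y - x) \<le> f y}"

definition phi :: "real measure \<Rightarrow> real measure \<Rightarrow> real \<Rightarrow> real" where
  "phi \<mu> \<nu> u = (if u = 1 then 0
      else Inf (subdiff (convex_minorant (E_u \<mu> \<nu> u)) (quantile \<mu> u)))"

definition phi_plus :: "real measure \<Rightarrow> real measure \<Rightarrow> real \<Rightarrow> real" where
  "phi_plus \<mu> \<nu> v = Lim (at_right v) (phi \<mu> \<nu>)"

text \<open>\<open>\<psi>_{v,x}(w) = x \<and> inf_{v<u\<le>w} \<phi>(u)\<close>; the infimum over the empty set (w = v) is \<open>+\<infinity>\<close>.\<close>
definition psi :: "real measure \<Rightarrow> real measure \<Rightarrow> real \<Rightarrow> real \<Rightarrow> real \<Rightarrow> real" where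
  "psi \<mu> \<nu> v x w = (if w \<le> v then x else min x (INF u\<in>{v<..w}. phi \<mu> \<nu> u))"

definition abs_continuous_on :: "real \<Rightarrow> real \<Rightarrow> (real \<Rightarrow> real) \<Rightarrow> bool" where
  "abs_continuous_on a b f \<longleftrightarrow>
    (\<forall>\<epsilon>>0. \<exists>\<delta>>0. \<forall>(n::nat) (I::nat \<Rightarrow> real \<times> real).
       (\<forall>i<n. a \<le> fst (I i) \<and> fst (I i) \<le> snd (I i) \<and> snd (I i) \<le> b) \<and>
       (\<forall>i<n. \<forall>j<n. i \<noteq> j \<longrightarrow> {fst (I i)<..<snd (I i)} \<inter> {fst (I j)<..<snd (I j)} = {}) \<and>
       (\<Sum>i<n. snd (I i) - fst (I i)) < \<delta>
       \<longrightarrow> (\<Sum>i<n. \<bar>f (snd (I i)) - f (fst (I i))\<bar>) < \<epsilon>)"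

end

theory Submission
  imports Defs
begin

text \<open>The key estimate is \<open>\<phi>(u) \<le> \<phi>(w) + (w - u)\<close> for \<open>v \<le> u \<le> w \<le> 1\<close>. Passing from
  \<open>\<mu>\<^sub>u\<close> to \<open>\<mu>\<^sub>w\<close> adds mass \<open>w - u\<close> at or to the right of \<open>G(u)\<close>, so \<open>E\<^sub>u - E\<^sub>w\<close> has slopes in
  \<open>[0, w - u]\<close>, and the least subgradient of the convex minorant, taken at \<open>G(u) \<le> G(w)\<close>, can
  drop by at most \<open>w - u\<close>; for \<open>w = 1\<close> the linear growth \<open>E\<^sub>u(y) \<le> (1 - u) y + C\<close> gives
  \<open>\<phi>(u) \<le> 1 - u\<close>. Hence \<open>\<phi>(u) + u\<close> is nondecreasing on \<open>[v, 1]\<close>, so \<open>\<phi>(v+)\<close> exists and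
  \<open>\<phi>(u) \<ge> \<phi>(v+) - (u - v)\<close>. The running minimum \<open>\<psi>\<close> of \<open>\<phi>\<close>, capped by
  \<open>x \<le> \<phi>(v+)\<close>, is then nonincreasing and \<open>1\<close>-Lipschitz, hence absolutely continuous.\<close>

section \<open>Convex minorants and subgradients\<close>

definition has_convex_minorant :: "(real \<Rightarrow> real) \<Rightarrow> bool" where
  "has_convex_minorant f \<longleftrightarrow> (\<exists>c. convex_on UNIV c \<and> (\<forall>y. c y \<le> f y))"

lemma convex_minorant_le:
  assumes "has_convex_minorant f" shows "convex_minorant f x \<le> f x"
proof -
  obtain c where "convex_on UNIV c" "\<forall>y. c y \<le> f y"
    using assms has_convex_minorant_def by blast
  then show ?thesis unfolding convex_minorant_def by (intro cSup_least) auto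
qed

lemma convex_minorant_greatest:
  assumes "convex_on UNIV c" "\<forall>y. c y \<le> f y" shows "c x \<le> convex_minorant f x"
  unfolding convex_minorant_def
  by (rule cSup_upper) (use assms in \<open>auto simp: bdd_above_def\<close>)

lemma convex_on_convex_minorant:
  assumes "has_convex_minorant f" shows "convex_on UNIV (convex_minorant f)"
proof (rule convex_on_linorderI)
  fix t x y :: real assume t: "0 < t" "t < 1"
  let ?z = "(1 - t) *\<^sub>R x + t *\<^sub>R y"
  have "g ?z \<le> (1 - t) * convex_minorant f x + t * convex_minorant f y"
    if g: "convex_on UNIV g" "\<forall>y. g y \<le> f y" for g
  proof -
    have "g ?z \<le> (1 - t) * g x + t * g y" using g(1) t by (intro convex_onD) auto
    also have "\<dots> \<le> (1 - t) * convex_minorant f x + t * convex_minorant f y"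
      using convex_minorant_greatest[OF g] t by (intro add_mono mult_left_mono) auto
    finally show ?thesis .
  qed
  moreover obtain c where "convex_on UNIV c" "\<forall>y. c y \<le> f y"
    using assms has_convex_minorant_def by blast
  ultimately show "convex_minorant f ?z \<le> (1 - t) * convex_minorant f x + t * convex_minorant f y"
    unfolding convex_minorant_def[of f ?z] by (intro cSup_least) auto
qed auto

lemma affine_minorant_le_convex_minorant:
  assumes "\<forall>y. A + B * (y - a) \<le> f y"
  shows "A + B * (z - a) \<le> convex_minorant f z"
proof -
  have "convex_on UNIV (\<lambda>y. A + B * (y - a))"
    by (rule convex_on_linorderI) (auto simp: algebra_simps)
  then show ?thesis using assms by (rule convex_minorant_greatest)
qed

lemma left_slope_le_subgradient:
  assumes "s \<in> subdiff g a" "y < a" shows "(g a - g y) / (a - y) \<le> s"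
proof -
  have "g a + s * (y - a) \<le> g y" using assms(1) by (simp add: subdiff_def)
  then show ?thesis using assms(2) by (simp add: divide_le_eq algebra_simps)
qed

lemma bdd_below_subdiff: "bdd_below (subdiff g a)"
  using left_slope_le_subgradient[of _ g a "a - 1"]
  by (intro bdd_belowI[of _ "g a - g (a - 1)"]) auto

lemma Sup_left_slopes_in_subdiff:
  fixes g :: "real \<Rightarrow> real"
  assumes g: "convex_on UNIV g"
  shows "(SUP y\<in>{..<a}. (g a - g y) / (a - y)) \<in> subdiff g a"
proof -
  let ?slope = "\<lambda>y. (g a - g y) / (a - y)"
  have swap: "(p - q) / (r - s) = (q - p) / (s - r)" for p q r s :: real
    by (metis minus_diff_eq minus_divide_divide)
  have right: "?slope y \<le> (g z - g a) / (z - a)" if "y < a" "a < z" for y z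
    using convex_on_slope_le[OF g UNIV_I UNIV_I that] swap[of "g a" "g y" a y] swap[of "g z" "g a" z a]
    by linarith
  have bdd: "bdd_above (?slope ` {..<a})"
    using right[of _ "a + 1"] by (intro bdd_aboveI[of _ "g (a + 1) - g a"]) auto
  show ?thesis unfolding subdiff_def
  proof safe
    fix y
    consider "y < a" | "y = a" | "a < y" by linarith
    then show "g a + (SUP y\<in>{..<a}. ?slope y) * (y - a) \<le> g y"
    proof cases
      case 1
      then have "?slope y \<le> (SUP y\<in>{..<a}. ?slope y)" by (intro cSUP_upper bdd) auto
      then show ?thesis using 1 by (simp add: divide_le_eq algebra_simps)
    next
      case 3
      have "(SUP y\<in>{..<a}. ?slope y) \<le> (g y - g a) / (y - a)"
        using right 3 by (intro cSUP_least) auto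
      then show ?thesis using 3 by (simp add: le_divide_eq algebra_simps)
    qed simp
  qed
qed

lemma Inf_subdiff_in_subdiff:
  fixes g :: "real \<Rightarrow> real"
  assumes "convex_on UNIV g" shows "Inf (subdiff g a) \<in> subdiff g a"
proof -
  let ?s = "SUP y\<in>{..<a}. (g a - g y) / (a - y)"
  have s: "?s \<in> subdiff g a" by (rule Sup_left_slopes_in_subdiff[OF assms])
  have "?s \<le> Inf (subdiff g a)"
    using s left_slope_le_subgradient by (intro cInf_greatest cSUP_least) auto
  moreover have "Inf (subdiff g a) \<le> ?s" by (rule cInf_lower[OF s bdd_below_subdiff])
  ultimately show ?thesis using s by simp
qed

text \<open>Write \<open>\<sigma>\<close>, \<open>\<tau>\<close> for the two least subgradients and suppose \<open>\<sigma> > \<tau> + \<delta>\<close>. The line of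
  slope \<open>\<tau> + \<delta>\<close> through the minorant of \<open>E\<^sub>1\<close> at \<open>a\<close> then cuts \<open>E\<^sub>1\<close> at some \<open>j\<close>, and this gap
  lifts a line of slope \<open>\<sigma> - \<delta>\<close> through the minorant of \<open>E\<^sub>2\<close> at \<open>b\<close> while keeping it below
  \<open>E\<^sub>2\<close>.\<close>
lemma Inf_subdiff_convex_minorant_le:
  fixes E\<^sub>1 E\<^sub>2 :: "real \<Rightarrow> real"
  assumes E\<^sub>1: "has_convex_minorant E\<^sub>1" and E\<^sub>2: "has_convex_minorant E\<^sub>2"
    and "a \<le> b"
    and slope: "\<And>j k. j \<le> k \<Longrightarrow> (E\<^sub>1 k - E\<^sub>2 k) - (E\<^sub>1 j - E\<^sub>2 j) \<le> \<delta> * (k - j)"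
  shows "Inf (subdiff (convex_minorant E\<^sub>1) a) \<le> Inf (subdiff (convex_minorant E\<^sub>2) b) + \<delta>"
proof (rule ccontr)
  define g\<^sub>1 where "g\<^sub>1 = convex_minorant E\<^sub>1"
  define g\<^sub>2 where "g\<^sub>2 = convex_minorant E\<^sub>2"
  define \<sigma> where "\<sigma> = Inf (subdiff g\<^sub>1 a)"
  define \<tau> where "\<tau> = Inf (subdiff g\<^sub>2 b)"
  assume "\<not> ?thesis"
  then have lt: "\<tau> + \<delta> < \<sigma>" unfolding \<sigma>_def \<tau>_def g\<^sub>1_def g\<^sub>2_def by simp
  have "\<sigma> \<in> subdiff g\<^sub>1 a"
    unfolding \<sigma>_def g\<^sub>1_def by (rule Inf_subdiff_in_subdiff[OF convex_on_convex_minorant[OF E\<^sub>1]])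
  then have \<sigma>: "g\<^sub>1 a + \<sigma> * (y - a) \<le> E\<^sub>1 y" for y
    using convex_minorant_le[OF E\<^sub>1, of y] unfolding subdiff_def g\<^sub>1_def by (blast intro: order_trans)
  have "\<tau> \<in> subdiff g\<^sub>2 b"
    unfolding \<tau>_def g\<^sub>2_def by (rule Inf_subdiff_in_subdiff[OF convex_on_convex_minorant[OF E\<^sub>2]])
  then have \<tau>: "g\<^sub>2 b + \<tau> * (y - b) \<le> E\<^sub>2 y" for y
    using convex_minorant_le[OF E\<^sub>2, of y] unfolding subdiff_def g\<^sub>2_def by (blast intro: order_trans)
  have "\<exists>j. E\<^sub>1 j < g\<^sub>1 a + (\<tau> + \<delta>) * (j - a)"
  proof (rule ccontr)
    assume "\<nexists>j. E\<^sub>1 j < g\<^sub>1 a + (\<tau> + \<delta>) * (j - a)"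
    then have "g\<^sub>1 a + (\<tau> + \<delta>) * (y - a) \<le> g\<^sub>1 y" for y
      unfolding g\<^sub>1_def by (intro affine_minorant_le_convex_minorant) (auto simp: not_less)
    then have "\<tau> + \<delta> \<in> subdiff g\<^sub>1 a" by (simp add: subdiff_def)
    then have "\<sigma> \<le> \<tau> + \<delta>" unfolding \<sigma>_def by (rule cInf_lower[OF _ bdd_below_subdiff])
    then show False using lt by simp
  qed
  then obtain j where j: "E\<^sub>1 j < g\<^sub>1 a + (\<tau> + \<delta>) * (j - a)" ..
  define \<epsilon> where "\<epsilon> = g\<^sub>1 a + (\<tau> + \<delta>) * (j - a) - E\<^sub>1 j"
  have "(g\<^sub>2 b + \<epsilon>) + (\<sigma> - \<delta>) * (k - b) \<le> E\<^sub>2 k" for k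
  proof (cases "k \<le> j + (b - a)")
    case True
    have "0 \<le> (\<sigma> - \<tau> - \<delta>) * ((j - a) - (k - b))" using True lt by simp
    then show ?thesis using \<tau>[of k] \<sigma>[of j] unfolding \<epsilon>_def by (simp add: algebra_simps)
  next
    case False
    then have "j \<le> k" using \<open>a \<le> b\<close> by simp
    moreover have "0 \<le> (\<sigma> - \<tau> - \<delta>) * (b - a)" using \<open>a \<le> b\<close> lt by simp
    ultimately show ?thesis using \<tau>[of j] \<sigma>[of k] slope[of j k] unfolding \<epsilon>_def
      by (simp add: algebra_simps)
  qed
  then have "(g\<^sub>2 b + \<epsilon>) + (\<sigma> - \<delta>) * (b - b) \<le> g\<^sub>2 b"
    unfolding g\<^sub>2_def by (intro affine_minorant_le_convex_minorant) auto
  then show False using j unfolding \<epsilon>_def by simp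
qed

lemma subgradient_le_of_affine_bound:
  fixes g :: "real \<Rightarrow> real"
  assumes s: "s \<in> subdiff g a" and bound: "\<And>y. 0 \<le> y \<Longrightarrow> g y \<le> A * y + C"
  shows "s \<le> A"
proof (rule ccontr)
  assume "\<not> s \<le> A"
  then have "0 < s - A" by simp
  define y where "y = max 0 ((C - g a + s * a + 1) / (s - A))"
  have "(C - g a + s * a + 1) / (s - A) \<le> y" by (simp add: y_def)
  then have "C - g a + s * a + 1 \<le> y * (s - A)"
    using \<open>0 < s - A\<close> by (simp add: divide_le_eq)
  moreover have "g a + s * (y - a) \<le> g y" using s by (simp add: subdiff_def)
  moreover have "g y \<le> A * y + C" by (rule bound) (simp add: y_def)
  ultimately show False by (simp add: algebra_simps)
qed

section \<open>Running minima\<close>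

definition running_min :: "(real \<Rightarrow> real) \<Rightarrow> real \<Rightarrow> real \<Rightarrow> real \<Rightarrow> real" where
  "running_min \<phi> v x w = (if w \<le> v then x else min x (INF u\<in>{v<..w}. \<phi> u))"

lemma lipschitz_on_imp_abs_continuous_on:
  assumes "L-lipschitz_on {a..b} f" shows "abs_continuous_on a b f"
proof -
  have L: "0 \<le> L" using assms by (rule lipschitz_on_nonneg)
  have "(\<Sum>i<n. \<bar>f (snd (I i)) - f (fst (I i))\<bar>) < \<epsilon>"
    if I: "\<forall>i<n. a \<le> fst (I i) \<and> fst (I i) \<le> snd (I i) \<and> snd (I i) \<le> b"
      and len: "(\<Sum>i<n. snd (I i) - fst (I i)) < \<epsilon> / (L + 1)"
    for \<epsilon> and n :: nat and I :: "nat \<Rightarrow> real \<times> real"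
  proof -
    have "(\<Sum>i<n. \<bar>f (snd (I i)) - f (fst (I i))\<bar>) \<le> (\<Sum>i<n. L * (snd (I i) - fst (I i)))"
    proof (rule sum_mono)
      fix i assume "i \<in> {..<n}"
      then have "fst (I i) \<in> {a..b}" "snd (I i) \<in> {a..b}" "fst (I i) \<le> snd (I i)" using I by auto
      then show "\<bar>f (snd (I i)) - f (fst (I i))\<bar> \<le> L * (snd (I i) - fst (I i))"
        using lipschitz_onD[OF assms, of "snd (I i)" "fst (I i)"] by (simp add: dist_real_def)
    qed
    also have "\<dots> = L * (\<Sum>i<n. snd (I i) - fst (I i))" by (simp add: sum_distrib_left)
    also have "\<dots> \<le> (L + 1) * (\<Sum>i<n. snd (I i) - fst (I i))"
      using I by (intro mult_right_mono sum_nonneg) auto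
    also have "\<dots> < \<epsilon>" using len L by (simp add: pos_less_divide_eq mult.commute)
    finally show ?thesis .
  qed
  moreover have "0 < \<epsilon> / (L + 1)" if "0 < \<epsilon>" for \<epsilon> using that L by simp
  ultimately show ?thesis unfolding abs_continuous_on_def by blast
qed

text \<open>The monotonicity of \<open>\<phi> u + u\<close> makes the right limit exist, so \<open>Lim\<close> is not a
  junk value here.\<close>
lemma Lim_at_right_minus_le:
  fixes \<phi> :: "real \<Rightarrow> real"
  assumes mono: "mono_on {v..c} (\<lambda>u. \<phi> u + u)" and "v < u" "u \<le> c"
  shows "Lim (at_right v) \<phi> - (u - v) \<le> \<phi> u"
proof -
  let ?h = "\<lambda>u. \<phi> u + u"
  have "at v within ({v<..} \<inter> {..<c}) = at_right v"
    by (rule at_within_nhd[of _ "{..<c}"]) (use assms in auto)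
  then have "(?h \<longlongrightarrow> Inf (?h ` ({v<..} \<inter> {..<c}))) (at_right v)"
    using Lim_right_bound[of "{..<c}" v ?h "?h v"] mono_onD[OF mono] by force
  then obtain L where h: "(?h \<longlongrightarrow> L) (at_right v)" ..
  have "(\<phi> \<longlongrightarrow> L - v) (at_right v)"
    using tendsto_diff[OF h tendsto_ident_at] by simp
  then have "Lim (at_right v) \<phi> = L - v" by (rule tendsto_Lim[rotated]) simp
  moreover have "L \<le> ?h u"
  proof (rule tendsto_upperbound[OF h])
    show "\<forall>\<^sub>F w in at_right v. ?h w \<le> ?h u"
      unfolding eventually_at_right_field
      using assms by (intro exI[of _ u]) (auto intro!: mono_onD[OF mono])
  qed simp
  ultimately show ?thesis by simp
qed

lemma bdd_below_of_mono_on_add_id: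
  fixes \<phi> :: "real \<Rightarrow> real"
  assumes mono: "mono_on {v..c} (\<lambda>u. \<phi> u + u)" and "b \<le> c"
  shows "bdd_below (\<phi> ` {v<..b})"
proof (rule bdd_belowI2)
  fix u assume "u \<in> {v<..b}"
  then have "\<phi> v + v \<le> \<phi> u + u" "u \<le> c" using assms by (auto intro!: mono_onD[OF mono])
  then show "\<phi> v + v - c \<le> \<phi> u" by simp
qed

lemma running_min_le:
  assumes "mono_on {v..c} (\<lambda>u. \<phi> u + u)" and "v < u" "u \<le> c"
  shows "running_min \<phi> v x u \<le> \<phi> u"
  using cINF_lower[OF bdd_below_of_mono_on_add_id[OF assms(1,3)], of u] assms(2)
  by (simp add: running_min_def min.coboundedI2)

lemma running_min_antimono:
  fixes \<phi> :: "real \<Rightarrow> real"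
  assumes mono: "mono_on {v..c} (\<lambda>u. \<phi> u + u)" and "a \<le> b" "b \<le> c"
  shows "running_min \<phi> v x b \<le> running_min \<phi> v x a"
proof (cases "a \<le> v")
  case False
  then have "(INF u\<in>{v<..b}. \<phi> u) \<le> (INF u\<in>{v<..a}. \<phi> u)"
    using assms by (intro cINF_superset_mono bdd_below_of_mono_on_add_id[OF mono]) auto
  then show ?thesis using False assms by (auto simp: running_min_def min.coboundedI2 min_le_iff_disj)
qed (auto simp: running_min_def)

lemma running_min_diff_le:
  fixes \<phi> :: "real \<Rightarrow> real"
  assumes mono: "mono_on {v..c} (\<lambda>u. \<phi> u + u)"
    and x: "x \<le> Lim (at_right v) \<phi>" and "v \<le> a" "a \<le> b" "b \<le> c"
  shows "running_min \<phi> v x a - running_min \<phi> v x b \<le> b - a"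
proof (cases "b \<le> v")
  case False
  let ?p = "running_min \<phi> v x"
  have "?p a - (b - a) \<le> \<phi> u" if u: "v < u" "u \<le> b" for u
  proof -
    consider "u \<le> a" | "a \<le> v" "a < u" | "v < a" "a < u" by linarith
    then show ?thesis
    proof cases
      case 1
      have "?p a \<le> ?p u" using 1 u assms by (intro running_min_antimono[OF mono]) auto
      moreover have "?p u \<le> \<phi> u" using u assms by (intro running_min_le[OF mono]) auto
      ultimately show ?thesis using assms by simp
    next
      case 2
      then show ?thesis using Lim_at_right_minus_le[OF mono u(1)] u assms
        by (simp add: running_min_def)
    next
      case 3
      then have "\<phi> a + a \<le> \<phi> u + u" using u assms by (intro mono_onD[OF mono]) auto
      moreover have "?p a \<le> \<phi> a" using 3 assms by (intro running_min_le[OF mono]) auto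
      ultimately show ?thesis using u assms by simp
    qed
  qed
  moreover have "?p a \<le> x" by (simp add: running_min_def)
  ultimately have "?p a - (b - a) \<le> min x (INF u\<in>{v<..b}. \<phi> u)"
    using False assms by (intro min.boundedI cINF_greatest) auto
  then show ?thesis using False unfolding running_min_def[of \<phi> v x b] by (auto simp: min_def)
qed (use assms in \<open>auto simp: running_min_def\<close>)

lemma lipschitz_on_running_min:
  fixes \<phi> :: "real \<Rightarrow> real"
  assumes mono: "mono_on {v..c} (\<lambda>u. \<phi> u + u)" and "x \<le> Lim (at_right v) \<phi>"
  shows "1-lipschitz_on {v..c} (running_min \<phi> v x)"
proof (rule lipschitz_on_leI)
  fix a b assume "a \<in> {v..c}" "b \<in> {v..c}" "a \<le> b"
  then show "dist (running_min \<phi> v x a) (running_min \<phi> v x b) \<le> 1 * dist a b"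
    using running_min_antimono[OF mono, of a b x] running_min_diff_le[OF assms, of a b]
    by (simp add: dist_real_def)
qed simp

section \<open>The measures \<open>\<mu>\<^sub>u\<close>\<close>

text \<open>Density of \<open>\<mu>\<^sub>u\<close> with respect to \<open>\<mu>\<close>. If \<open>\<mu>\<close> has no atom at \<open>G(u)\<close>, the
  fraction is \<open>0\<close> by the convention \<open>x / 0 = 0\<close>, which is correct because then the excess
  mass \<open>u - \<mu>(-\<infinity>, G(u))\<close> vanishes.\<close>
definition mu_u_weight :: "real measure \<Rightarrow> real \<Rightarrow> real \<Rightarrow> real" where
  "mu_u_weight M u x = indicator {..<quantile M u} x +
     (u - measure M {..<quantile M u}) / measure M {quantile M u} * indicator {quantile M u} x"

context real_distribution
begin

lemma quantile_set_nonempty: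
  assumes "u < 1" shows "{x. u \<le> measure M {..x}} \<noteq> {}"
proof -
  have "\<forall>\<^sub>F x in at_top. u < cdf M x" using order_tendstoD(1)[OF cdf_lim_at_top_prob assms] .
  then obtain N where "\<forall>x\<ge>N. u < cdf M x" by (auto simp: eventually_at_top_linorder)
  then show ?thesis by (auto simp: cdf_def2 intro!: exI[of _ N] less_imp_le)
qed

lemma bdd_below_quantile_set:
  assumes "0 < u" shows "bdd_below {x. u \<le> measure M {..x}}"
proof -
  have "\<forall>\<^sub>F x in at_bot. cdf M x < u" using order_tendstoD(2)[OF cdf_lim_at_bot assms] .
  then obtain N where N: "\<forall>x\<le>N. cdf M x < u" by (auto simp: eventually_at_bot_linorder)
  show ?thesis
  proof (rule bdd_belowI[of _ N])
    fix x assume "x \<in> {x. u \<le> measure M {..x}}"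
    then have "u \<le> cdf M x" by (simp add: cdf_def2)
    then show "N \<le> x" using N by (metis linorder_le_cases not_le)
  qed
qed

lemma le_measure_atMost_quantile:
  assumes "0 < u" "u < 1" shows "u \<le> measure M {..quantile M u}"
proof -
  let ?G = "quantile M u"
  have "\<forall>\<^sub>F y in at_right ?G. u \<le> cdf M y"
    unfolding eventually_at_right_field
  proof (intro exI[of _ "?G + 1"] conjI allI impI)
    fix y assume "?G < y"
    then obtain x where "u \<le> measure M {..x}" "x < y"
      using cInf_less_iff[OF quantile_set_nonempty bdd_below_quantile_set] assms
      unfolding quantile_def by auto
    then show "u \<le> cdf M y" using cdf_nondecreasing[of x y] by (simp add: cdf_def2)
  qed simp
  moreover have "(cdf M \<longlongrightarrow> cdf M ?G) (at_right ?G)"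
    using cdf_is_right_cont by (simp add: continuous_within)
  ultimately have "u \<le> cdf M ?G" by (intro tendsto_lowerbound) auto
  then show ?thesis by (simp add: cdf_def2)
qed

lemma measure_lessThan_quantile_le:
  assumes "0 < u" shows "measure M {..<quantile M u} \<le> u"
proof -
  let ?G = "quantile M u"
  have "cdf M y \<le> u" if "y < ?G" for y
  proof (rule ccontr)
    assume "\<not> cdf M y \<le> u"
    then have "?G \<le> y"
      unfolding quantile_def using bdd_below_quantile_set[OF assms]
      by (intro cInf_lower) (auto simp: cdf_def2)
    then show False using \<open>y < ?G\<close> by simp
  qed
  then have "\<forall>\<^sub>F y in at_left ?G. cdf M y \<le> u"
    unfolding eventually_at_left_field by (intro exI[of _ "?G - 1"]) auto
  then show ?thesis by (intro tendsto_upperbound[OF cdf_at_left]) auto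
qed

lemma quantile_mono:
  assumes "0 < u" "u \<le> w" "w < 1" shows "quantile M u \<le> quantile M w"
  unfolding quantile_def using assms
  by (intro cInf_superset_mono quantile_set_nonempty bdd_below_quantile_set) auto

lemma mu_u_atom_mass_bounds:
  assumes "0 < u" "u < 1"
  shows "0 \<le> u - measure M {..<quantile M u}"
    and "u - measure M {..<quantile M u} \<le> measure M {quantile M u}"
proof -
  have "measure M ({..<quantile M u} \<union> {quantile M u}) = measure M {..<quantile M u} + measure M {quantile M u}"
    by (rule finite_measure_Union) auto
  moreover have "{..<quantile M u} \<union> {quantile M u} = {..quantile M u}" by auto
  ultimately have "measure M {..quantile M u} = measure M {..<quantile M u} + measure M {quantile M u}"
    by simp
  then show "0 \<le> u - measure M {..<quantile M u}"
    and "u - measure M {..<quantile M u} \<le> measure M {quantile M u}"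
    using measure_lessThan_quantile_le[OF assms(1)] le_measure_atMost_quantile[OF assms] by auto
qed

lemma mu_u_atom_fraction_mult:
  assumes "0 < u" "u < 1"
  shows "(u - measure M {..<quantile M u}) / measure M {quantile M u} * measure M {quantile M u}
    = u - measure M {..<quantile M u}"
  using mu_u_atom_mass_bounds[OF assms] by (cases "measure M {quantile M u} = 0") auto

lemma mu_u_weight_bounds:
  assumes "0 < u" "u < 1"
  shows "0 \<le> mu_u_weight M u x" "mu_u_weight M u x \<le> 1"
proof -
  have "0 \<le> (u - measure M {..<quantile M u}) / measure M {quantile M u}"
    "(u - measure M {..<quantile M u}) / measure M {quantile M u} \<le> 1"
    using mu_u_atom_mass_bounds[OF assms]
    by (auto simp: divide_le_eq_1 intro: divide_nonneg_nonneg)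
  then show "0 \<le> mu_u_weight M u x" "mu_u_weight M u x \<le> 1"
    unfolding mu_u_weight_def by (auto simp: indicator_def)
qed

lemma mu_u_weight_measurable[measurable]: "mu_u_weight M u \<in> borel_measurable M"
  unfolding mu_u_weight_def by measurable

lemma integral_mu_u_weight:
  assumes "0 < u" "u < 1"
  shows "integral\<^sup>L M (mu_u_weight M u) = u"
proof -
  have "integral\<^sup>L M (mu_u_weight M u) = measure M {..<quantile M u} +
      (u - measure M {..<quantile M u}) / measure M {quantile M u} * measure M {quantile M u}"
    unfolding mu_u_weight_def
    by (subst Bochner_Integration.integral_add) (auto simp: emeasure_eq_measure)
  then show ?thesis unfolding mu_u_atom_fraction_mult[OF assms] by simp
qed

lemma mu_u_eq_density:
  assumes "0 < u" "u < 1"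
  shows "mu_u M u = density M (\<lambda>x. ennreal (mu_u_weight M u x))"
proof -
  let ?G = "quantile M u" and ?D = "density M (\<lambda>x. ennreal (mu_u_weight M u x))"
  let ?c = "u - measure M {..<quantile M u}" and ?m = "measure M {quantile M u}"
  have "?D = measure_of UNIV (sets borel) (emeasure ?D)"
    using measure_of_of_measure[of ?D] by simp
  also have "\<dots> = mu_u M u"
    unfolding mu_u_def
  proof (rule measure_of_eq)
    fix A :: "real set" assume "A \<in> sigma_sets UNIV (sets borel)"
    then have A[measurable]: "A \<in> sets borel" by (metis sets.sigma_sets_eq space_borel)
    have "emeasure ?D A = (\<integral>\<^sup>+ x. indicator (A \<inter> {..<?G}) x + ennreal (?c / ?m) * indicator (A \<inter> {?G}) x \<partial>M)"
      using mu_u_atom_mass_bounds[OF assms]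
      by (subst emeasure_density) (auto intro!: nn_integral_cong simp: mu_u_weight_def indicator_def)
    also have "\<dots> = emeasure M (A \<inter> {..<?G}) + ennreal (?c / ?m) * emeasure M (A \<inter> {?G})"
      by (subst nn_integral_add) (auto simp: nn_integral_cmult_indicator)
    also have "ennreal (?c / ?m) * emeasure M (A \<inter> {?G}) = ennreal (?c * indicator A ?G)"
      using mu_u_atom_mass_bounds[OF assms] mu_u_atom_fraction_mult[OF assms]
      by (cases "?G \<in> A") (auto simp: emeasure_eq_measure ennreal_mult[symmetric])
    finally show "emeasure ?D A = emeasure M (A \<inter> {..<?G}) + ennreal (?c * indicator A ?G)" .
  qed simp
  finally show ?thesis by simp
qed

lemma put_price_mu_u:
  assumes "0 < u" "u < 1"
  shows "put_price (mu_u M u) k = integral\<^sup>L M (\<lambda>x. mu_u_weight M u x * max (k - x) 0)"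
  unfolding put_price_def mu_u_eq_density[OF assms]
  by (subst integral_density) (auto simp: mu_u_weight_bounds[OF assms])

lemma mu_u_weight_mono:
  assumes "0 < u" "u \<le> w" "w < 1"
  shows "mu_u_weight M u x \<le> mu_u_weight M w x"
proof (cases "quantile M u = quantile M w")
  case True
  have "(u - measure M {..<quantile M u}) / measure M {quantile M u}
      \<le> (w - measure M {..<quantile M u}) / measure M {quantile M u}"
    using assms by (intro divide_right_mono) auto
  then show ?thesis unfolding mu_u_weight_def True by (auto simp: indicator_def)
next
  case False
  then have "quantile M u < quantile M w" using quantile_mono[OF assms] by simp
  then have "mu_u_weight M w x = 1 \<or> mu_u_weight M u x = 0"
    unfolding mu_u_weight_def by (auto simp: indicator_def)
  then show ?thesis using mu_u_weight_bounds assms by fastforce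
qed

lemma integrable_mu_u_weight_mult:
  assumes "integrable M f" "0 < u" "u < 1"
  shows "integrable M (\<lambda>x. mu_u_weight M u x * f x)"
  using assms(1) by (rule Bochner_Integration.integrable_bound)
    (use mu_u_weight_bounds[OF assms(2,3)] borel_measurable_integrable[OF assms(1)]
      in \<open>auto simp: abs_mult intro!: mult_left_le_one_le\<close>)

lemma integrable_mu_u_weight:
  assumes "0 < u" "u < 1" shows "integrable M (mu_u_weight M u)"
  using integrable_mu_u_weight_mult[OF integrable_const[of 1] assms] by simp

end

section \<open>Monotonicity of \<open>\<phi>\<close>\<close>

lemma real_prob_fm_imp_real_distribution: "real_prob_fm M \<Longrightarrow> real_distribution M"
  unfolding real_prob_fm_def real_distribution_def real_distribution_axioms_def by auto

lemma integrable_put_payoff: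
  assumes "real_prob_fm M" shows "integrable M (\<lambda>x. max (k - x) 0)"
proof -
  interpret real_distribution M by (rule real_prob_fm_imp_real_distribution[OF assms])
  have "integrable M (\<lambda>x. \<bar>k\<bar> + \<bar>x\<bar>)" using assms by (auto simp: real_prob_fm_def)
  then show ?thesis by (rule Bochner_Integration.integrable_bound) auto
qed

lemma convex_on_put_payoff: "convex_on UNIV (\<lambda>x::real. max (k - x) 0)"
proof (rule convex_on_linorderI)
  fix t x y :: real assume t: "0 < t" "t < 1"
  have "k - ((1 - t) * x + t * y) = (1 - t) * (k - x) + t * (k - y)" by (simp add: algebra_simps)
  moreover have "(1 - t) * (k - x) \<le> (1 - t) * max (k - x) 0" "t * (k - y) \<le> t * max (k - y) 0"
    using t by (auto intro!: mult_left_mono)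
  moreover have "0 \<le> (1 - t) * max (k - x) 0 + t * max (k - y) 0" using t by auto
  ultimately show "max (k - ((1 - t) *\<^sub>R x + t *\<^sub>R y)) 0 \<le> (1 - t) * max (k - x) 0 + t * max (k - y) 0"
    by simp
qed auto

locale convex_ordered_pair =
  fixes \<mu> \<nu> :: "real measure"
  assumes mu: "real_prob_fm \<mu>" and nu: "real_prob_fm \<nu>" and convex_order: "convex_order \<mu> \<nu>"
begin

interpretation Mu: real_distribution \<mu> by (rule real_prob_fm_imp_real_distribution[OF mu])
interpretation Nu: real_distribution \<nu> by (rule real_prob_fm_imp_real_distribution[OF nu])

lemma E_u_eq:
  assumes "0 < u" "u < 1"
  shows "E_u \<mu> \<nu> u k = put_price \<nu> k - integral\<^sup>L \<mu> (\<lambda>x. mu_u_weight \<mu> u x * max (k - x) 0)"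
  unfolding E_u_def by (simp add: Mu.put_price_mu_u[OF assms])

lemma E_u_nonneg:
  assumes "0 < u" "u < 1" shows "0 \<le> E_u \<mu> \<nu> u k"
proof -
  have "integral\<^sup>L \<mu> (\<lambda>x. mu_u_weight \<mu> u x * max (k - x) 0) \<le> integral\<^sup>L \<mu> (\<lambda>x. max (k - x) 0)"
    using Mu.mu_u_weight_bounds[OF assms]
    by (intro integral_mono Mu.integrable_mu_u_weight_mult integrable_put_payoff mu assms)
       (auto intro!: mult_left_le_one_le)
  also have "\<dots> \<le> put_price \<nu> k"
    using convex_order convex_on_put_payoff integrable_put_payoff[OF mu] integrable_put_payoff[OF nu]
    unfolding convex_order_def put_price_def by blast
  finally show ?thesis unfolding E_u_eq[OF assms] by simp
qed

lemma has_convex_minorant_E_u: "0 < u \<Longrightarrow> u < 1 \<Longrightarrow> has_convex_minorant (E_u \<mu> \<nu> u)"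
  unfolding has_convex_minorant_def
  by (intro exI[of _ "\<lambda>_. 0"]) (auto simp: convex_on_const E_u_nonneg)

lemma E_u_diff_slope_le:
  assumes u: "0 < u" "u \<le> w" "w < 1" and "j \<le> k"
  shows "(E_u \<mu> \<nu> u k - E_u \<mu> \<nu> w k) - (E_u \<mu> \<nu> u j - E_u \<mu> \<nu> w j) \<le> (w - u) * (k - j)"
proof -
  have u1: "u < 1" and w0: "0 < w" using u by auto
  let ?d = "\<lambda>x. mu_u_weight \<mu> w x - mu_u_weight \<mu> u x"
  have int_d: "integrable \<mu> (\<lambda>x. ?d x * f x)" if "integrable \<mu> f" for f
    using Mu.integrable_mu_u_weight_mult[OF that u(1) u1] Mu.integrable_mu_u_weight_mult[OF that w0 u(3)]
    by (simp add: left_diff_distrib)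
  have E_diff: "E_u \<mu> \<nu> u t - E_u \<mu> \<nu> w t = integral\<^sup>L \<mu> (\<lambda>x. ?d x * max (t - x) 0)" for t
    using Mu.integrable_mu_u_weight_mult[OF integrable_put_payoff[OF mu] u(1) u1]
      Mu.integrable_mu_u_weight_mult[OF integrable_put_payoff[OF mu] w0 u(3)]
    unfolding E_u_eq[OF u(1) u1] E_u_eq[OF w0 u(3)] left_diff_distrib
    by (simp add: Bochner_Integration.integral_diff)
  have "(E_u \<mu> \<nu> u k - E_u \<mu> \<nu> w k) - (E_u \<mu> \<nu> u j - E_u \<mu> \<nu> w j)
      = integral\<^sup>L \<mu> (\<lambda>x. ?d x * (max (k - x) 0 - max (j - x) 0))"
    unfolding E_diff right_diff_distrib
    using int_d[OF integrable_put_payoff[OF mu]] by (simp add: Bochner_Integration.integral_diff)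
  also have "\<dots> \<le> integral\<^sup>L \<mu> (\<lambda>x. ?d x * (k - j))"
  proof (rule integral_mono)
    show "integrable \<mu> (\<lambda>x. ?d x * (max (k - x) 0 - max (j - x) 0))"
      by (intro int_d Bochner_Integration.integrable_diff integrable_put_payoff[OF mu])
    show "integrable \<mu> (\<lambda>x. ?d x * (k - j))" by (intro int_d Mu.integrable_const)
    show "?d x * (max (k - x) 0 - max (j - x) 0) \<le> ?d x * (k - j)" for x
      using Mu.mu_u_weight_mono[OF u] \<open>j \<le> k\<close> by (intro mult_left_mono) auto
  qed
  also have "\<dots> = (w - u) * (k - j)"
    using Mu.integral_mu_u_weight[OF u(1) u1] Mu.integral_mu_u_weight[OF w0 u(3)]
      Mu.integrable_mu_u_weight[OF u(1) u1] Mu.integrable_mu_u_weight[OF w0 u(3)]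
    by (simp add: Bochner_Integration.integral_diff)
  finally show ?thesis .
qed

lemma phi_le_phi_add:
  assumes u: "0 < u" "u \<le> w" "w < 1"
  shows "phi \<mu> \<nu> u \<le> phi \<mu> \<nu> w + (w - u)"
proof -
  have "u < 1" "0 < w" using u by auto
  with u show ?thesis
    unfolding phi_def
    by (simp add: Inf_subdiff_convex_minorant_le has_convex_minorant_E_u Mu.quantile_mono
        E_u_diff_slope_le)
qed

lemma E_u_le_affine:
  assumes u: "0 < u" "u < 1" and "0 \<le> y"
  shows "E_u \<mu> \<nu> u y \<le> (1 - u) * y
    + (integral\<^sup>L \<nu> (\<lambda>x. \<bar>x\<bar>) + integral\<^sup>L \<mu> (\<lambda>x. mu_u_weight \<mu> u x * x))"
proof -
  have id: "integrable \<mu> (\<lambda>x. x)" "integrable \<nu> (\<lambda>x. x)" using mu nu by (auto simp: real_prob_fm_def)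
  have "put_price \<nu> y \<le> integral\<^sup>L \<nu> (\<lambda>x. y + \<bar>x\<bar>)"
    unfolding put_price_def using \<open>0 \<le> y\<close> id(2)
    by (intro integral_mono integrable_put_payoff[OF nu]) auto
  also have "\<dots> = y + integral\<^sup>L \<nu> (\<lambda>x. \<bar>x\<bar>)"
    using id(2) Nu.prob_space by (subst Bochner_Integration.integral_add) auto
  finally have "put_price \<nu> y \<le> y + integral\<^sup>L \<nu> (\<lambda>x. \<bar>x\<bar>)" .
  moreover have "u * y - integral\<^sup>L \<mu> (\<lambda>x. mu_u_weight \<mu> u x * x)
      \<le> integral\<^sup>L \<mu> (\<lambda>x. mu_u_weight \<mu> u x * max (y - x) 0)"
  proof -
    note w = Mu.integrable_mu_u_weight_mult[OF _ u]
    have "integral\<^sup>L \<mu> (\<lambda>x. mu_u_weight \<mu> u x * (y - x))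
        = integral\<^sup>L \<mu> (\<lambda>x. mu_u_weight \<mu> u x * y) - integral\<^sup>L \<mu> (\<lambda>x. mu_u_weight \<mu> u x * x)"
      unfolding right_diff_distrib
      by (intro Bochner_Integration.integral_diff w id(1) Mu.integrable_const)
    then have "u * y - integral\<^sup>L \<mu> (\<lambda>x. mu_u_weight \<mu> u x * x)
        = integral\<^sup>L \<mu> (\<lambda>x. mu_u_weight \<mu> u x * (y - x))"
      by (simp add: Mu.integral_mu_u_weight[OF u])
    also have "\<dots> \<le> integral\<^sup>L \<mu> (\<lambda>x. mu_u_weight \<mu> u x * max (y - x) 0)"
      using Mu.mu_u_weight_bounds[OF u]
      by (intro integral_mono w Bochner_Integration.integrable_diff id(1) Mu.integrable_const
          integrable_put_payoff[OF mu] mult_left_mono) auto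
    finally show ?thesis .
  qed
  ultimately show ?thesis unfolding E_u_eq[OF u] by (simp add: algebra_simps)
qed

lemma phi_le_one_minus:
  assumes u: "0 < u" "u < 1" shows "phi \<mu> \<nu> u \<le> 1 - u"
proof (rule subgradient_le_of_affine_bound)
  show "phi \<mu> \<nu> u \<in> subdiff (convex_minorant (E_u \<mu> \<nu> u)) (quantile \<mu> u)"
    unfolding phi_def using u
    by (simp add: Inf_subdiff_in_subdiff convex_on_convex_minorant has_convex_minorant_E_u)
  show "convex_minorant (E_u \<mu> \<nu> u) y \<le> (1 - u) * y
    + (integral\<^sup>L \<nu> (\<lambda>x. \<bar>x\<bar>) + integral\<^sup>L \<mu> (\<lambda>x. mu_u_weight \<mu> u x * x))" if "0 \<le> y" for y
    using convex_minorant_le[OF has_convex_minorant_E_u[OF u]] E_u_le_affine[OF u that]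
    by (rule order_trans)
qed

lemma mono_on_phi_add_id:
  assumes "0 < v" shows "mono_on {v..1} (\<lambda>u. phi \<mu> \<nu> u + u)"
proof (rule mono_onI)
  fix u w assume uw: "u \<in> {v..1}" "w \<in> {v..1}" "u \<le> w"
  have phi_1: "phi \<mu> \<nu> 1 = 0" by (simp add: phi_def)
  have "w \<le> 1" "u \<le> w" using uw by auto
  then consider "w < 1" | "u < 1" "w = 1" | "u = 1" "w = 1" by linarith
  then show "phi \<mu> \<nu> u + u \<le> phi \<mu> \<nu> w + w"
  proof cases
    case 1
    then show ?thesis using phi_le_phi_add[of u w] uw assms by simp
  next
    case 2
    then show ?thesis using phi_le_one_minus[of u] uw assms phi_1 by simp
  qed simp
qed

end

theorem lemma7p3:
  fixes \<mu> \<nu> :: "real measure" and v x :: real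
  assumes "real_prob_fm \<mu>" and "real_prob_fm \<nu>"
    and "convex_order \<mu> \<nu>"
    and "is_interval {k. put_price \<nu> k - put_price \<mu> k > 0}"
    and "0 < v" and "v < 1"
    and "phi \<mu> \<nu> v \<le> x" and "x \<le> phi_plus \<mu> \<nu> v"
  shows "(\<forall>a b. v \<le> a \<longrightarrow> a \<le> b \<longrightarrow> b \<le> 1 \<longrightarrow> psi \<mu> \<nu> v x b \<le> psi \<mu> \<nu> v x a)
       \<and> abs_continuous_on v 1 (psi \<mu> \<nu> v x)"
proof -
  interpret convex_ordered_pair \<mu> \<nu> using assms(1-3) by unfold_locales
  have psi: "psi \<mu> \<nu> v x = running_min (phi \<mu> \<nu>) v x"
    by (simp add: fun_eq_iff psi_def running_min_def)
  have mono: "mono_on {v..1} (\<lambda>u. phi \<mu> \<nu> u + u)"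
    using \<open>0 < v\<close> by (rule mono_on_phi_add_id)
  have "x \<le> Lim (at_right v) (phi \<mu> \<nu>)"
    using \<open>x \<le> phi_plus \<mu> \<nu> v\<close> by (simp add: phi_plus_def)
  then have "1-lipschitz_on {v..1} (psi \<mu> \<nu> v x)"
    unfolding psi by (rule lipschitz_on_running_min[OF mono])
  then show ?thesis
    unfolding psi using running_min_antimono[OF mono]
    by (auto intro: lipschitz_on_imp_abs_continuous_on)
qed

end
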